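(* Let $W\subset T(\mathbf E)^\vee$ be the $\mathbb Q$-span of $\mathbf e_{10}^\vee\mathbf e_4^\vee$, $\mathbf e_4^\vee\mathbf e_{10}^\vee$, $\mathbf e_8^\vee\mathbf e_6^\vee$, $\mathbf e_6^\vee\mathbf e_8^\vee$. Then \[ \iota(U(\mathfrak u)^\vee)\cap W\subseteq\mathrm{span}_{\mathbb Q}\{\mathbf e_{10}^\vee\,ш\,\mathbf e_4^\vee,\ \mathbf e_8^\vee\,ш\,\mathbf e_6^\vee,\ 3\mathbf e_{10}^\vee\mathbf e_4^\vee+\mathbf e_8^\vee\mathbf e_6^\vee\}, \] where $ш$ denotes the shuffle product (so $\mathbf e_a^\vee ш\mathbf e_b^\vee=\mathbf e_a^\vee\mathbf e_b^\vee+\mathbf e_b^\vee\mathbf e_a^\vee$).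
   Context: $\mathbf E=\{\mathbf e_0,\mathbf e_2,\mathbf e_4,\ldots\}$; $T(\mathbf E)$ is the free associative (tensor) $\mathbb Q$-algebra on $\mathbf E$, graded with each $\mathbf e_{2k}$ of degree one, and $T(\mathbf E)^\vee$ is its graded dual, with basis the dual words $\mathbf e^\vee_{2k_1}\cdots\mathbf e^\vee_{2k_n}$ and product the shuffle product. Let $\mathcal L$ be the free Lie algebra on $\{x,y\}$, and for $k\ge0$ let $\varepsilon_{2k}$ be the derivation of $\mathcal L$ with $\varepsilon_{2k}(x)=\mathrm{ad}^{2k}(x)(y)$ and $\varepsilon_{2k}(y)=\sum_{0\le j<k}(-1)^j[\mathrm{ad}^j(x)(y),\mathrm{ad}^{2k-1-j}(x)(y)]$. Let $\mathfrak u$ be the Lie algebra of derivations generated by the $\varepsilon_{2k}$, $U(\mathfrak u)$ its universal enveloping algebra (graded, $\varepsilon_{2k}$ of degree one), and $\iota:U(\mathfrak u)^\vee\hookrightarrow T(\mathbf E)^\vee$ the graded dual of the surjection $T(\mathbf E)\to U(\mathfrak u)$, $\mathbf e_{2k}\mapsto\varepsilon_{2k}$. (Known input: in $\mathfrak u$ one has $[\varepsilon_{10},\varepsilon_4]-3[\varepsilon_8,\varepsilon_6]=0$.) *)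

theory Defs
  imports Complex_Main
begin

text \<open>Noncommutative polynomials over rationals in letters of type 'a, represented as
  coefficient functions on words.  All objects below are finitely supported.
  Letters of T(E): the natural number k stands for the generator e_(2k).
  Letters of the free algebra on x,y: False stands for x, True stands for y.\<close>

type_synonym 'a ncpoly = "'a list \<Rightarrow> rat"

definition supp :: "'a ncpoly \<Rightarrow> 'a list set" where
  "supp p = {w. p w \<noteq> 0}"

definition mono :: "'a list \<Rightarrow> 'a ncpoly" where
  "mono w = (\<lambda>v. if v = w then 1 else 0)"

definition ncmul :: "'a ncpoly \<Rightarrow> 'a ncpoly \<Rightarrow> 'a ncpoly" where
  "ncmul p q = (\<lambda>w. \<Sum>i\<le>length w. p (take i w) * q (drop i w))"

definition comm :: "'a ncpoly \<Rightarrow> 'a ncpoly \<Rightarrow> 'a ncpoly" where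
  "comm p q = (\<lambda>w. ncmul p q w - ncmul q p w)"

inductive_set lie_span :: "'a ncpoly set" where
  gen: "mono [a] \<in> lie_span"
| add: "p \<in> lie_span \<Longrightarrow> q \<in> lie_span \<Longrightarrow> (\<lambda>w. p w + q w) \<in> lie_span"
| smult: "p \<in> lie_span \<Longrightarrow> (\<lambda>w. c * p w) \<in> lie_span"
| bracket: "p \<in> lie_span \<Longrightarrow> q \<in> lie_span \<Longrightarrow> comm p q \<in> lie_span"

definition X :: "bool ncpoly" where "X = mono [False]"
definition Y :: "bool ncpoly" where "Y = mono [True]"

definition adpow :: "nat \<Rightarrow> bool ncpoly \<Rightarrow> bool ncpoly \<Rightarrow> bool ncpoly" where
  "adpow n p q = (comm p ^^ n) q"

text \<open>eps_x k = epsilon_(2k)(x), eps_y k = epsilon_(2k)(y).\<close>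
definition eps_x :: "nat \<Rightarrow> bool ncpoly" where
  "eps_x k = adpow (2*k) X Y"

definition eps_y :: "nat \<Rightarrow> bool ncpoly" where
  "eps_y k = (\<lambda>w. \<Sum>j<k. (-1::rat)^j * comm (adpow j X Y) (adpow (2*k-1-j) X Y) w)"

definition eps_gen :: "nat \<Rightarrow> bool \<Rightarrow> bool ncpoly" where
  "eps_gen k b = (if b then eps_y k else eps_x k)"

text \<open>The derivation epsilon_(2k), extended to the free associative algebra Q<x,y>.\<close>
definition Dword :: "nat \<Rightarrow> bool list \<Rightarrow> bool ncpoly" where
  "Dword k w = (\<lambda>v. \<Sum>i<length w.
      ncmul (ncmul (mono (take i w)) (eps_gen k (w!i))) (mono (drop (Suc i) w)) v)"

definition Dop :: "nat \<Rightarrow> bool ncpoly \<Rightarrow> bool ncpoly" where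
  "Dop k p = (\<lambda>v. \<Sum>w\<in>supp p. p w * Dword k w v)"

text \<open>Action of T(E) on Q<x,y>: e_(2k1)...e_(2kn) acts as the composite of the derivations.\<close>
definition rho :: "nat ncpoly \<Rightarrow> bool ncpoly \<Rightarrow> bool ncpoly" where
  "rho t p = (\<lambda>v. \<Sum>u\<in>supp t. t u * foldr Dop u p v)"

text \<open>Kernel of the Lie map FreeLie(E) \<rightarrow> u (derivations of L vanishing on L).\<close>
definition lie_rel :: "nat ncpoly set" where
  "lie_rel = {P \<in> lie_span. \<forall>p \<in> (lie_span :: bool ncpoly set). rho P p = (\<lambda>_. 0)}"

text \<open>Kernel of T(E) \<rightarrow> U(u): two-sided ideal generated by lie_rel.\<close>
inductive_set U_ideal :: "nat ncpoly set" where
  gen: "P \<in> lie_rel \<Longrightarrow> P \<in> U_ideal"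
| add: "p \<in> U_ideal \<Longrightarrow> q \<in> U_ideal \<Longrightarrow> (\<lambda>w. p w + q w) \<in> U_ideal"
| smult: "p \<in> U_ideal \<Longrightarrow> (\<lambda>w. c * p w) \<in> U_ideal"
| lmul: "p \<in> U_ideal \<Longrightarrow> ncmul (mono u) p \<in> U_ideal"
| rmul: "p \<in> U_ideal \<Longrightarrow> ncmul p (mono u) \<in> U_ideal"

text \<open>Elements of T(E)^dual are finitely supported coefficient functions on words
  (combinations of dual words), paired with T(E) in the obvious way.\<close>
definition pairing :: "nat ncpoly \<Rightarrow> nat ncpoly \<Rightarrow> rat" where
  "pairing phi t = (\<Sum>w\<in>supp t. phi w * t w)"

text \<open>iota(U(u)^dual) inside T(E)^dual.\<close>
definition U_dual :: "nat ncpoly set" where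
  "U_dual = {phi. finite (supp phi) \<and> (\<forall>t \<in> U_ideal. pairing phi t = 0)}"

fun shw :: "'a list \<Rightarrow> 'a list \<Rightarrow> 'a ncpoly" where
  "shw [] v = mono v"
| "shw u [] = mono u"
| "shw (a#u) (b#v) = (\<lambda>w. ncmul (mono [a]) (shw u (b#v)) w + ncmul (mono [b]) (shw (a#u) v) w)"

definition shuffle :: "'a ncpoly \<Rightarrow> 'a ncpoly \<Rightarrow> 'a ncpoly" where
  "shuffle p q = (\<lambda>w. \<Sum>u\<in>supp p. \<Sum>v\<in>supp q. p u * q v * shw u v w)"

end

theory Submission
  imports Defs
begin

(* The element [e10, e4] - 3 [e8, e6] of the free Lie algebra on E maps to zero in u, so it lies
   in the kernel of T(E) -> U(u) and is annihilated by every element of U(u)^dual.  For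
   a e10'e4' + b e4'e10' + c e8'e6' + d e6'e8' this is the single linear condition
   a - b - 3c + 3d = 0, and the part of W it cuts out is spanned by the two shuffles and
   3 e10'e4' + e8'e6'.
   The relation itself is a finite computation: D = [eps10, eps4] - 3 [eps8, eps6] is a derivation
   of Q<x,y>, so it kills every Lie polynomial as soon as it kills x and y, and D x = D y = 0 are
   identities between explicit polynomials of degree 15.  These are decided by the simplifier,
   evaluating a normalisation of integer combinations of words (stored in a binary trie) whose
   correctness is proved once and for all. *)

section \<open>Multiplication of finitely supported polynomials\<close>

lemma supp_mono: "supp (mono u) = {u}"
  by (auto simp: supp_def mono_def)

lemma finite_supp_zero [simp]: "finite (supp (\<lambda>w. 0))"
  by (simp add: supp_def)

lemma finite_supp_mono [simp]: "finite (supp (mono u))"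
  by (simp add: supp_mono)

lemma finite_supp_add [simp]:
  "finite (supp p) \<Longrightarrow> finite (supp q) \<Longrightarrow> finite (supp (\<lambda>w. p w + q w))"
  by (rule finite_subset[of _ "supp p \<union> supp q"]) (auto simp: supp_def)

lemma finite_supp_diff [simp]:
  "finite (supp p) \<Longrightarrow> finite (supp q) \<Longrightarrow> finite (supp (\<lambda>w. p w - q w))"
  by (rule finite_subset[of _ "supp p \<union> supp q"]) (auto simp: supp_def)

lemma finite_supp_smult [simp]: "finite (supp p) \<Longrightarrow> finite (supp (\<lambda>w. c * p w))"
  by (rule finite_subset[of _ "supp p"]) (auto simp: supp_def)

lemma finite_supp_sum [simp]:
  "finite I \<Longrightarrow> (\<And>i. i \<in> I \<Longrightarrow> finite (supp (h i))) \<Longrightarrow> finite (supp (\<lambda>w. \<Sum>i\<in>I. h i w))"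
proof (induction I rule: finite_induct)
  case (insert i I)
  then have "finite (supp (\<lambda>w. h i w + (\<Sum>j\<in>I. h j w)))"
    by (intro finite_supp_add) auto
  with insert show ?case by simp
qed (simp add: supp_def)

lemma finite_supp_ncmul [simp]:
  assumes "finite (supp p)" "finite (supp q)"
  shows "finite (supp (ncmul p q))"
proof -
  have "supp (ncmul p q) \<subseteq> (\<lambda>(u, v). u @ v) ` (supp p \<times> supp q)"
  proof
    fix w assume "w \<in> supp (ncmul p q)"
    then obtain i where "p (take i w) * q (drop i w) \<noteq> 0"
      unfolding supp_def ncmul_def by (auto intro: sum.not_neutral_contains_not_neutral)
    then have "(take i w, drop i w) \<in> supp p \<times> supp q"
      by (simp add: supp_def)
    then show "w \<in> (\<lambda>(u, v). u @ v) ` (supp p \<times> supp q)"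
      by (metis (no_types, lifting) append_take_drop_id case_prod_conv image_eqI)
  qed
  then show ?thesis
    using assms by (meson finite_SigmaI finite_imageI finite_subset)
qed

lemma finite_supp_comm [simp]:
  "finite (supp p) \<Longrightarrow> finite (supp q) \<Longrightarrow> finite (supp (comm p q))"
  by (simp add: comm_def)

lemma mono_expansion:
  assumes "finite (supp p)"
  shows "(\<lambda>w. \<Sum>u\<in>supp p. p u * mono u w) = p"
proof
  fix w
  have "(\<Sum>u\<in>supp p. p u * mono u w) = (\<Sum>u\<in>supp p. if u = w then p u else 0)"
    by (rule sum.cong) (auto simp: mono_def)
  also have "\<dots> = p w"
    using assms by (auto simp: supp_def)
  finally show "(\<Sum>u\<in>supp p. p u * mono u w) = p w" .
qed

lemma ncmul_add_left: "ncmul (\<lambda>w. p w + q w) r = (\<lambda>w. ncmul p r w + ncmul q r w)"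
  by (simp add: ncmul_def distrib_right sum.distrib)

lemma ncmul_add_right: "ncmul r (\<lambda>w. p w + q w) = (\<lambda>w. ncmul r p w + ncmul r q w)"
  by (simp add: ncmul_def distrib_left sum.distrib)

lemma ncmul_diff_left: "ncmul (\<lambda>w. p w - q w) r = (\<lambda>w. ncmul p r w - ncmul q r w)"
  by (simp add: ncmul_def left_diff_distrib sum_subtractf)

lemma ncmul_diff_right: "ncmul r (\<lambda>w. p w - q w) = (\<lambda>w. ncmul r p w - ncmul r q w)"
  by (simp add: ncmul_def right_diff_distrib sum_subtractf)

lemma ncmul_smult_left: "ncmul (\<lambda>w. c * p w) r = (\<lambda>w. c * ncmul p r w)"
  by (simp add: ncmul_def sum_distrib_left mult.assoc)

lemma ncmul_smult_right: "ncmul r (\<lambda>w. c * p w) = (\<lambda>w. c * ncmul r p w)"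
  by (simp add: ncmul_def sum_distrib_left mult.left_commute)

lemma ncmul_sum_left: "ncmul (\<lambda>w. \<Sum>i\<in>I. h i w) r = (\<lambda>w. \<Sum>i\<in>I. ncmul (h i) r w)"
  by (simp add: ncmul_def sum_distrib_right) (rule ext, rule sum.swap)

lemma ncmul_sum_right: "ncmul r (\<lambda>w. \<Sum>i\<in>I. h i w) = (\<lambda>w. \<Sum>i\<in>I. ncmul r (h i) w)"
  by (simp add: ncmul_def sum_distrib_left) (rule ext, rule sum.swap)

lemma ncmul_zero_left [simp]: "ncmul (\<lambda>w. 0) r = (\<lambda>w. 0)"
  by (simp add: ncmul_def)

lemma ncmul_zero_right [simp]: "ncmul r (\<lambda>w. 0) = (\<lambda>w. 0)"
  by (simp add: ncmul_def)

lemma ncmul_mono_mono [simp]: "ncmul (mono u) (mono v) = mono (u @ v)"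
proof
  fix w
  have "mono u (take i w) * mono v (drop i w) = (if i = length u \<and> w = u @ v then 1 else 0)"
    if "i \<le> length w" for i
    using that by (auto simp: mono_def)
  then have "ncmul (mono u) (mono v) w = (\<Sum>i\<le>length w. if i = length u \<and> w = u @ v then 1 else 0)"
    unfolding ncmul_def by (intro sum.cong) auto
  also have "\<dots> = mono (u @ v) w"
    by (auto simp: mono_def)
  finally show "ncmul (mono u) (mono v) w = mono (u @ v) w" .
qed

lemma ncmul_Nil_left [simp]: "ncmul (mono []) p = p"
proof
  fix w
  have "ncmul (mono []) p w = (\<Sum>i\<le>length w. if i = 0 then p w else 0)"
    unfolding ncmul_def by (rule sum.cong) (auto simp: mono_def)
  then show "ncmul (mono []) p w = p w" by simp
qed

lemma ncmul_Nil_right [simp]: "ncmul p (mono []) = p"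
proof
  fix w
  have "ncmul p (mono []) w = (\<Sum>i\<le>length w. if i = length w then p w else 0)"
    unfolding ncmul_def by (rule sum.cong) (auto simp: mono_def)
  then show "ncmul p (mono []) w = p w" by simp
qed

lemma sum_triangle_swap:
  fixes f :: "nat \<Rightarrow> nat \<Rightarrow> 'a :: comm_monoid_add"
  shows "(\<Sum>i\<le>n. \<Sum>j\<le>i. f i j) = (\<Sum>j\<le>n. \<Sum>i=j..n. f i j)"
  by (induction n) (simp_all add: sum.distrib sum.cl_ivl_Suc)

lemma ncmul_assoc: "ncmul (ncmul p q) r = ncmul p (ncmul q r)"
proof
  fix w :: "'a list"
  let ?n = "length w"
  let ?F = "\<lambda>i j. p (take j w) * q (take (i - j) (drop j w)) * r (drop i w)"
  have "take j (take i w) = take j w" "drop j (take i w) = take (i - j) (drop j w)" if "j \<le> i" for i j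
    using that by (simp_all add: min_absorb1 take_drop)
  then have "ncmul (ncmul p q) r w = (\<Sum>i\<le>?n. \<Sum>j\<le>i. ?F i j)"
    by (simp add: ncmul_def sum_distrib_right min_absorb2)
  also have "\<dots> = (\<Sum>j\<le>?n. \<Sum>i=j..?n. ?F i j)"
    by (rule sum_triangle_swap)
  also have "\<dots> = (\<Sum>j\<le>?n. \<Sum>l\<le>?n - j. ?F (j + l) j)"
    by (rule sum.cong[OF refl]) (simp add: sum.atLeastAtMost_shift_0 atLeast0AtMost)
  also have "\<dots> = ncmul p (ncmul q r) w"
    by (simp add: ncmul_def sum_distrib_left mult.assoc add.commute)
  finally show "ncmul (ncmul p q) r w = ncmul p (ncmul q r) w" .
qed

lemma ncmul_mono_mono_assoc [simp]: "ncmul (mono u) (ncmul (mono v) p) = ncmul (mono (u @ v)) p"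
  by (simp flip: ncmul_assoc)

section \<open>The derivations \<open>Dop k\<close>\<close>

lemma Dword_Nil [simp]: "Dword k [] = (\<lambda>v. 0)"
  by (simp add: Dword_def)

lemma Dword_Cons:
  "Dword k (a # s) = (\<lambda>v. ncmul (eps_gen k a) (mono s) v + ncmul (mono [a]) (Dword k s) v)"
proof
  fix v
  let ?T = "\<lambda>i. ncmul (ncmul (mono (take i (a # s))) (eps_gen k ((a # s) ! i)))
    (mono (drop (Suc i) (a # s))) v"
  have "Dword k (a # s) v = ?T 0 + (\<Sum>j<length s. ?T (Suc j))"
    unfolding Dword_def by (simp only: length_Cons sum.lessThan_Suc_shift)
  also have "(\<Sum>j<length s. ?T (Suc j)) = ncmul (mono [a]) (Dword k s) v"
    by (simp add: Dword_def ncmul_sum_right ncmul_assoc)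
  finally show "Dword k (a # s) v = ncmul (eps_gen k a) (mono s) v + ncmul (mono [a]) (Dword k s) v"
    by simp
qed

lemma Dword_append:
  "Dword k (u @ v) = (\<lambda>x. ncmul (Dword k u) (mono v) x + ncmul (mono u) (Dword k v) x)"
proof (induction u)
  case (Cons a u)
  show ?case
    by (simp add: Cons Dword_Cons ncmul_add_left ncmul_add_right ncmul_assoc fun_eq_iff)
qed simp

lemma finite_supp_adpow: "finite (supp p) \<Longrightarrow> finite (supp q) \<Longrightarrow> finite (supp (adpow n p q))"
  by (induction n) (simp_all add: adpow_def)

lemma finite_supp_eps_gen [simp]: "finite (supp (eps_gen k a))"
  by (auto simp: eps_gen_def eps_x_def eps_y_def X_def Y_def
      intro!: finite_supp_adpow finite_supp_sum finite_supp_smult finite_supp_comm)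

lemma finite_supp_Dword [simp]: "finite (supp (Dword k w))"
  by (simp add: Dword_def)

lemma finite_supp_Dop [simp]: "finite (supp (Dop k p))"
proof (cases "finite (supp p)")
  case False
  then show ?thesis by (simp add: Dop_def supp_def)
qed (simp add: Dop_def)

lemma Dop_eq_sum:
  assumes "finite S" "supp p \<subseteq> S"
  shows "Dop k p = (\<lambda>v. \<Sum>w\<in>S. p w * Dword k w v)"
  unfolding Dop_def
  by (rule ext, rule sum.mono_neutral_left) (use assms in \<open>auto simp: supp_def\<close>)

lemma Dop_mono [simp]: "Dop k (mono u) = Dword k u"
  unfolding Dop_def supp_mono by (simp add: mono_def)

lemma Dop_add:
  assumes "finite (supp p)" "finite (supp q)"
  shows "Dop k (\<lambda>w. p w + q w) = (\<lambda>v. Dop k p v + Dop k q v)"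
proof -
  let ?S = "supp p \<union> supp q"
  have "finite ?S" using assms by simp
  then have "Dop k (\<lambda>w. p w + q w) = (\<lambda>v. \<Sum>w\<in>?S. (p w + q w) * Dword k w v)"
    and "Dop k p = (\<lambda>v. \<Sum>w\<in>?S. p w * Dword k w v)"
    and "Dop k q = (\<lambda>v. \<Sum>w\<in>?S. q w * Dword k w v)"
    by (auto intro!: Dop_eq_sum simp: supp_def)
  then show ?thesis
    by (simp add: distrib_right sum.distrib)
qed

lemma Dop_smult: "Dop k (\<lambda>w. c * p w) = (\<lambda>v. c * Dop k p v)"
proof (cases "c = 0")
  case False
  then have "supp (\<lambda>w. c * p w) = supp p" by (auto simp: supp_def)
  then show ?thesis by (simp add: Dop_def sum_distrib_left mult.assoc)
qed (simp add: Dop_def supp_def)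

lemma Dop_sum:
  assumes "finite I" "\<And>i. i \<in> I \<Longrightarrow> finite (supp (h i))"
  shows "Dop k (\<lambda>w. \<Sum>i\<in>I. h i w) = (\<lambda>v. \<Sum>i\<in>I. Dop k (h i) v)"
  using assms
proof (induction I rule: finite_induct)
  case (insert i I)
  then show ?case
    using Dop_add[of "h i" "\<lambda>w. \<Sum>j\<in>I. h j w" k] by simp
qed (simp add: Dop_def supp_def)

lemma ncmul_expansion:
  assumes "finite (supp p)" "finite (supp q)"
  shows "ncmul p q = (\<lambda>w. \<Sum>u\<in>supp p. \<Sum>v\<in>supp q. p u * q v * mono (u @ v) w)"
proof -
  have "ncmul p q = ncmul (\<lambda>w. \<Sum>u\<in>supp p. p u * mono u w) (\<lambda>w. \<Sum>v\<in>supp q. q v * mono v w)"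
    by (simp only: mono_expansion assms)
  then show ?thesis
    by (simp add: ncmul_sum_left ncmul_sum_right ncmul_smult_left ncmul_smult_right mult.assoc)
qed

lemma Dop_ncmul:
  assumes p: "finite (supp p)" and q: "finite (supp q)"
  shows "Dop k (ncmul p q) = (\<lambda>v. ncmul (Dop k p) q v + ncmul p (Dop k q) v)"
proof -
  have "Dop k (ncmul p q) = (\<lambda>x. \<Sum>u\<in>supp p. \<Sum>v\<in>supp q. p u * q v * Dword k (u @ v) x)"
    using assms by (simp add: ncmul_expansion Dop_sum Dop_smult)
  also have "\<dots> = (\<lambda>x. \<Sum>u\<in>supp p. \<Sum>v\<in>supp q.
      p u * q v * ncmul (Dword k u) (mono v) x + p u * q v * ncmul (mono u) (Dword k v) x)"
    by (simp add: Dword_append distrib_left)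
  also have "\<dots> = (\<lambda>x. ncmul (Dop k p) q x + ncmul p (Dop k q) x)"
  proof -
    have "ncmul (Dop k p) q =
        ncmul (\<lambda>w. \<Sum>u\<in>supp p. p u * Dword k u w) (\<lambda>w. \<Sum>v\<in>supp q. q v * mono v w)"
      by (simp only: mono_expansion q Dop_def)
    moreover have "ncmul p (Dop k q) =
        ncmul (\<lambda>w. \<Sum>u\<in>supp p. p u * mono u w) (\<lambda>w. \<Sum>v\<in>supp q. q v * Dword k v w)"
      by (simp only: mono_expansion p Dop_def)
    ultimately show ?thesis
      by (simp add: ncmul_sum_left ncmul_sum_right ncmul_smult_left ncmul_smult_right
          sum.distrib mult.assoc)
  qed
  finally show ?thesis .
qed

section \<open>Derivations and Lie polynomials\<close>

text \<open>The conditions only concern finitely supported arguments: on any other function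
  \<^const>\<open>Dop\<close> returns the junk value 0, its defining sum running over an infinite support.\<close>

definition derivation :: "('a ncpoly \<Rightarrow> 'a ncpoly) \<Rightarrow> bool" where
  "derivation D \<longleftrightarrow>
     (\<forall>p. finite (supp p) \<longrightarrow> finite (supp (D p)))
   \<and> (\<forall>p q. finite (supp p) \<longrightarrow> finite (supp q) \<longrightarrow> D (\<lambda>w. p w + q w) = (\<lambda>w. D p w + D q w))
   \<and> (\<forall>p c. finite (supp p) \<longrightarrow> D (\<lambda>w. c * p w) = (\<lambda>w. c * D p w))
   \<and> (\<forall>p q. finite (supp p) \<longrightarrow> finite (supp q) \<longrightarrow>
        D (ncmul p q) = (\<lambda>w. ncmul (D p) q w + ncmul p (D q) w))"

lemma derivationD:
  assumes "derivation D"
  shows derivation_finite_supp: "finite (supp p) \<Longrightarrow> finite (supp (D p))"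
    and derivation_add: "finite (supp p) \<Longrightarrow> finite (supp q) \<Longrightarrow> D (\<lambda>w. p w + q w) = (\<lambda>w. D p w + D q w)"
    and derivation_smult: "finite (supp p) \<Longrightarrow> D (\<lambda>w. c * p w) = (\<lambda>w. c * D p w)"
    and derivation_ncmul: "finite (supp p) \<Longrightarrow> finite (supp q) \<Longrightarrow>
          D (ncmul p q) = (\<lambda>w. ncmul (D p) q w + ncmul p (D q) w)"
  using assms unfolding derivation_def by blast+

lemma derivation_diff:
  assumes "derivation D" "finite (supp p)" "finite (supp q)"
  shows "D (\<lambda>w. p w - q w) = (\<lambda>w. D p w - D q w)"
proof -
  have "D (\<lambda>w. p w + (\<lambda>w. (-1) * q w) w) = (\<lambda>w. D p w + D (\<lambda>w. (-1) * q w) w)"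
    using assms by (intro derivation_add finite_supp_smult)
  then show ?thesis
    by (simp only: derivation_smult[OF assms(1,3)]) simp
qed

lemma derivation_Dop: "derivation (Dop k)"
  by (simp add: derivation_def Dop_add Dop_smult Dop_ncmul)

lemma derivation_commutator:
  assumes A: "derivation A" and B: "derivation B"
  shows "derivation (\<lambda>p w. A (B p) w - B (A p) w)"
  unfolding derivation_def
proof (intro conjI allI impI)
  fix p q :: "'a ncpoly" and c :: rat
  assume p: "finite (supp p)" and q: "finite (supp q)"
  note fin = derivation_finite_supp[OF A] derivation_finite_supp[OF B]
  show "finite (supp (\<lambda>w. A (B p) w - B (A p) w))"
    using p fin by simp
  show "(\<lambda>w. A (B (\<lambda>w. p w + q w)) w - B (A (\<lambda>w. p w + q w)) w) =
        (\<lambda>w. (A (B p) w - B (A p) w) + (A (B q) w - B (A q) w))"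
    using p q fin by (simp add: derivation_add[OF A] derivation_add[OF B] fun_eq_iff)
  show "(\<lambda>w. A (B (\<lambda>w. c * p w)) w - B (A (\<lambda>w. c * p w)) w) = (\<lambda>w. c * (A (B p) w - B (A p) w))"
    using p fin by (simp add: derivation_smult[OF A] derivation_smult[OF B] right_diff_distrib)
  show "(\<lambda>w. A (B (ncmul p q)) w - B (A (ncmul p q)) w) =
        (\<lambda>w. ncmul (\<lambda>w. A (B p) w - B (A p) w) q w + ncmul p (\<lambda>w. A (B q) w - B (A q) w) w)"
    using p q fin
    by (simp add: derivation_ncmul[OF A] derivation_ncmul[OF B] derivation_add[OF A] derivation_add[OF B]
        ncmul_diff_left ncmul_diff_right fun_eq_iff)
qed

lemma derivation_diff_smult:
  assumes A: "derivation A" and B: "derivation B"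
  shows "derivation (\<lambda>p w. A p w - c * B p w)"
  unfolding derivation_def
proof (intro conjI allI impI)
  fix p q :: "'a ncpoly" and d :: rat
  assume p: "finite (supp p)" and q: "finite (supp q)"
  note fin = derivation_finite_supp[OF A] derivation_finite_supp[OF B]
  show "finite (supp (\<lambda>w. A p w - c * B p w))"
    using p fin by simp
  show "(\<lambda>w. A (\<lambda>w. p w + q w) w - c * B (\<lambda>w. p w + q w) w) =
        (\<lambda>w. (A p w - c * B p w) + (A q w - c * B q w))"
    using p q by (simp add: derivation_add[OF A] derivation_add[OF B] algebra_simps)
  show "(\<lambda>w. A (\<lambda>w. d * p w) w - c * B (\<lambda>w. d * p w) w) = (\<lambda>w. d * (A p w - c * B p w))"
    using p by (simp add: derivation_smult[OF A] derivation_smult[OF B] algebra_simps)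
  show "(\<lambda>w. A (ncmul p q) w - c * B (ncmul p q) w) =
        (\<lambda>w. ncmul (\<lambda>w. A p w - c * B p w) q w + ncmul p (\<lambda>w. A q w - c * B q w) w)"
    using p q
    by (simp add: derivation_ncmul[OF A] derivation_ncmul[OF B] ncmul_diff_left ncmul_diff_right
        ncmul_smult_left ncmul_smult_right fun_eq_iff algebra_simps)
qed

lemma finite_supp_lie_span: "p \<in> lie_span \<Longrightarrow> finite (supp p)"
  by (induction rule: lie_span.induct) simp_all

lemma derivation_vanishes_on_lie_span:
  assumes D: "derivation D" and gens: "\<And>a. D (mono [a]) = (\<lambda>w. 0)"
    and "p \<in> lie_span"
  shows "D p = (\<lambda>w. 0)"
  using \<open>p \<in> lie_span\<close>
proof (induction rule: lie_span.induct)
  case (add p q)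
  then show ?case by (simp add: derivation_add[OF D] finite_supp_lie_span)
next
  case (smult p c)
  then show ?case by (simp add: derivation_smult[OF D] finite_supp_lie_span)
next
  case (bracket p q)
  then show ?case
    by (simp add: comm_def derivation_diff[OF D] derivation_ncmul[OF D] finite_supp_lie_span)
qed (rule gens)

section \<open>Pollack's relation \<open>[e\<^sub>1\<^sub>0, e\<^sub>4] - 3 [e\<^sub>8, e\<^sub>6]\<close>\<close>

definition pollack_rel :: "nat ncpoly" where
  "pollack_rel = (\<lambda>w. comm (mono [5]) (mono [2]) w - 3 * comm (mono [4]) (mono [3]) w)"

lemma pollack_rel_in_lie_span: "pollack_rel \<in> lie_span"
proof -
  have "(\<lambda>w. comm (mono [5]) (mono [2]) w + (\<lambda>w. (-3) * comm (mono [4]) (mono [3]) w) w) \<in> lie_span"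
    by (intro lie_span.add lie_span.smult lie_span.bracket lie_span.gen)
  then show ?thesis by (simp add: pollack_rel_def)
qed

lemma pollack_rel_eq:
  "pollack_rel = (\<lambda>w. mono [5,2] w - mono [2,5] w - 3 * mono [4,3] w + 3 * mono [3,4] w)"
  by (simp add: pollack_rel_def comm_def fun_eq_iff)

lemma supp_pollack_rel: "supp pollack_rel = {[5,2], [2,5], [4,3], [3,4]}"
  by (auto simp: supp_def pollack_rel_eq mono_def)

lemma rho_pollack_rel:
  "rho pollack_rel p =
     (\<lambda>v. Dop 5 (Dop 2 p) v - Dop 2 (Dop 5 p) v - 3 * (Dop 4 (Dop 3 p) v - Dop 3 (Dop 4 p) v))"
  unfolding rho_def supp_pollack_rel
  by (simp add: pollack_rel_eq mono_def fun_eq_iff algebra_simps)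

lemma derivation_rho_pollack_rel: "derivation (rho pollack_rel)"
  unfolding rho_pollack_rel
  by (intro derivation_diff_smult derivation_commutator derivation_Dop)

lemma pairing_pollack_rel:
  "pairing phi pollack_rel = phi [5,2] - phi [2,5] - 3 * phi [4,3] + 3 * phi [3,4]"
  unfolding pairing_def supp_pollack_rel
  by (simp add: pollack_rel_eq mono_def)

section \<open>Verified normalisation of integer combinations of words\<close>

type_synonym word_terms = "(bool list \<times> int) list"

definition poly_of_terms :: "word_terms \<Rightarrow> bool ncpoly" where
  "poly_of_terms L = (\<lambda>v. \<Sum>(w, c)\<leftarrow>L. of_int c * mono w v)"

lemma poly_of_terms_Nil [simp]: "poly_of_terms [] = (\<lambda>v. 0)"
  by (simp add: poly_of_terms_def)

lemma poly_of_terms_Cons [simp]: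
  "poly_of_terms ((w, c) # L) = (\<lambda>v. of_int c * mono w v + poly_of_terms L v)"
  by (simp add: poly_of_terms_def)

lemma poly_of_terms_append [simp]:
  "poly_of_terms (L @ M) = (\<lambda>v. poly_of_terms L v + poly_of_terms M v)"
  by (simp add: poly_of_terms_def)

lemma poly_of_terms_concat:
  "poly_of_terms (concat (map f xs)) = (\<lambda>v. \<Sum>x\<leftarrow>xs. poly_of_terms (f x) v)"
  by (induction xs) simp_all

lemma finite_supp_poly_of_terms [simp]: "finite (supp (poly_of_terms L))"
  by (induction L) auto

definition scale_terms :: "int \<Rightarrow> word_terms \<Rightarrow> word_terms" where
  "scale_terms c L = map (\<lambda>(w, a). (w, c * a)) L"

definition mul_terms :: "word_terms \<Rightarrow> word_terms \<Rightarrow> word_terms" where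
  "mul_terms L M = concat (map (\<lambda>(u, a). map (\<lambda>(v, b). (u @ v, a * b)) M) L)"

definition comm_terms :: "word_terms \<Rightarrow> word_terms \<Rightarrow> word_terms" where
  "comm_terms L M = mul_terms L M @ scale_terms (-1) (mul_terms M L)"

lemma poly_of_scale_terms: "poly_of_terms (scale_terms c L) = (\<lambda>v. of_int c * poly_of_terms L v)"
  by (induction L) (auto simp: scale_terms_def algebra_simps)

lemma poly_of_mul_terms: "poly_of_terms (mul_terms L M) = ncmul (poly_of_terms L) (poly_of_terms M)"
proof (induction L)
  case (Cons x L)
  obtain u a where x: "x = (u, a)" by (cases x)
  have "poly_of_terms (map (\<lambda>(v, b). (u @ v, a * b)) M) =
      (\<lambda>w. of_int a * ncmul (mono u) (poly_of_terms M) w)"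
    by (induction M) (auto simp: ncmul_add_right ncmul_smult_right algebra_simps)
  with Cons show ?case
    by (simp add: x mul_terms_def ncmul_add_left ncmul_smult_left)
qed (simp add: mul_terms_def)

lemma poly_of_comm_terms: "poly_of_terms (comm_terms L M) = comm (poly_of_terms L) (poly_of_terms M)"
  by (simp add: comm_terms_def comm_def poly_of_scale_terms poly_of_mul_terms)

datatype trie = Leaf | Node int trie trie

fun trie_poly :: "trie \<Rightarrow> bool ncpoly" where
  "trie_poly Leaf w = 0"
| "trie_poly (Node a l r) [] = of_int a"
| "trie_poly (Node a l r) (b # w) = trie_poly (if b then r else l) w"

text \<open>Stated by patterns on the letter rather than with \<open>if\<close>: the latter makes the evaluation
  by \<open>code_simp\<close> below several times slower.\<close>

fun trie_add :: "bool list \<Rightarrow> int \<Rightarrow> trie \<Rightarrow> trie" where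
  "trie_add [] c Leaf = Node c Leaf Leaf"
| "trie_add [] c (Node a l r) = Node (a + c) l r"
| "trie_add (False # w) c Leaf = Node 0 (trie_add w c Leaf) Leaf"
| "trie_add (True # w) c Leaf = Node 0 Leaf (trie_add w c Leaf)"
| "trie_add (False # w) c (Node a l r) = Node a (trie_add w c l) r"
| "trie_add (True # w) c (Node a l r) = Node a l (trie_add w c r)"

fun trie_terms :: "trie \<Rightarrow> word_terms" where
  "trie_terms Leaf = []"
| "trie_terms (Node a l r) = (if a = 0 then [] else [([], a)])
     @ map (\<lambda>(w, c). (False # w, c)) (trie_terms l) @ map (\<lambda>(w, c). (True # w, c)) (trie_terms r)"

lemma trie_poly_trie_add: "trie_poly (trie_add w c t) v = trie_poly t v + of_int c * mono w v"
proof (induction w arbitrary: t v)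
  case Nil
  then show ?case by (cases t; cases v) (auto simp: mono_def)
next
  case (Cons b w)
  then show ?case by (cases t; cases v; cases b) (auto simp: mono_def)
qed

lemma poly_of_terms_map_Cons:
  "poly_of_terms (map (\<lambda>(w, c). (b # w, c)) L) v =
     (case v of [] \<Rightarrow> 0 | b' # v' \<Rightarrow> if b' = b then poly_of_terms L v' else 0)"
  by (induction L) (auto simp: mono_def split: list.split)

lemma poly_of_trie_terms: "poly_of_terms (trie_terms t) = trie_poly t"
proof (induction t)
  case (Node a l r)
  show ?case
  proof
    fix v
    show "poly_of_terms (trie_terms (Node a l r)) v = trie_poly (Node a l r) v"
      using Node by (cases v) (auto simp: poly_of_terms_map_Cons mono_def)
  qed
qed simp
fun trie_add_between :: "int \<Rightarrow> bool list \<Rightarrow> bool list \<Rightarrow> word_terms \<Rightarrow> trie \<Rightarrow> trie" where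
  "trie_add_between c pre suf [] t = t"
| "trie_add_between c pre suf ((u, b) # G) t =
     trie_add_between c pre suf G (trie_add (pre @ u @ suf) (c * b) t)"

fun trie_add_Dword :: "word_terms \<Rightarrow> word_terms \<Rightarrow> int \<Rightarrow> bool list \<Rightarrow> bool list \<Rightarrow> trie \<Rightarrow> trie" where
  "trie_add_Dword gx gy c pre [] t = t"
| "trie_add_Dword gx gy c pre (a # suf) t =
     trie_add_Dword gx gy c (pre @ [a]) suf (trie_add_between c pre suf (if a then gy else gx) t)"

fun trie_add_Dop :: "word_terms \<Rightarrow> word_terms \<Rightarrow> word_terms \<Rightarrow> trie \<Rightarrow> trie" where
  "trie_add_Dop gx gy [] t = t"
| "trie_add_Dop gx gy ((w, c) # L) t = trie_add_Dop gx gy L (trie_add_Dword gx gy c [] w t)"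

lemma trie_poly_add_between:
  "trie_poly (trie_add_between c pre suf G t) =
     (\<lambda>v. trie_poly t v + of_int c * ncmul (ncmul (mono pre) (poly_of_terms G)) (mono suf) v)"
proof (induction G arbitrary: t)
  case (Cons x G)
  obtain u b where x: "x = (u, b)" by (cases x)
  show ?case
    by (simp add: x Cons trie_poly_trie_add ncmul_add_left ncmul_add_right ncmul_smult_left
        ncmul_smult_right ncmul_assoc fun_eq_iff algebra_simps)
qed simp

context
  fixes k :: nat and gx gy :: word_terms
  assumes gx: "poly_of_terms gx = eps_gen k False" and gy: "poly_of_terms gy = eps_gen k True"
begin

lemma trie_poly_add_Dword:
  "trie_poly (trie_add_Dword gx gy c pre w t) =
     (\<lambda>v. trie_poly t v + of_int c * ncmul (mono pre) (Dword k w) v)"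
proof (induction w arbitrary: pre t)
  case (Cons a suf)
  show ?case
    by (cases a) (simp_all add: Cons gx gy trie_poly_add_between Dword_Cons ncmul_add_right ncmul_assoc
        fun_eq_iff algebra_simps)
qed simp

lemma trie_poly_add_Dop:
  "trie_poly (trie_add_Dop gx gy L t) = (\<lambda>v. trie_poly t v + Dop k (poly_of_terms L) v)"
proof (induction L arbitrary: t)
  case (Cons x L)
  obtain w c where x: "x = (w, c)" by (cases x)
  have "Dop k (poly_of_terms (x # L)) = (\<lambda>v. of_int c * Dword k w v + Dop k (poly_of_terms L) v)"
    by (simp add: x Dop_add Dop_smult)
  then show ?case
    by (simp add: x Cons trie_poly_add_Dword fun_eq_iff algebra_simps)
qed (simp add: Dop_def supp_def)

end

definition normalize_terms :: "word_terms \<Rightarrow> word_terms" where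
  "normalize_terms L = trie_terms (trie_add_between 1 [] [] L Leaf)"

lemma poly_of_normalize_terms [simp]: "poly_of_terms (normalize_terms L) = poly_of_terms L"
  by (simp add: normalize_terms_def poly_of_trie_terms trie_poly_add_between)

fun ad_terms :: "nat \<Rightarrow> word_terms" where
  "ad_terms 0 = [([True], 1)]"
| "ad_terms (Suc n) = normalize_terms (comm_terms [([False], 1)] (ad_terms n))"

definition eps_x_terms :: "nat \<Rightarrow> word_terms" where
  "eps_x_terms k = ad_terms (2 * k)"

definition eps_y_terms :: "nat \<Rightarrow> word_terms" where
  "eps_y_terms k = normalize_terms (concat (map (\<lambda>j.
     scale_terms ((-1) ^ j) (comm_terms (ad_terms j) (ad_terms (2 * k - 1 - j)))) [0..<k]))"

definition Dop_terms :: "nat \<Rightarrow> word_terms \<Rightarrow> word_terms" where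
  "Dop_terms k L = trie_terms (trie_add_Dop (eps_x_terms k) (eps_y_terms k) L Leaf)"

definition pollack_terms :: "word_terms \<Rightarrow> word_terms" where
  "pollack_terms L = normalize_terms
     (Dop_terms 5 (Dop_terms 2 L) @ scale_terms (-1) (Dop_terms 2 (Dop_terms 5 L))
      @ scale_terms (-3) (Dop_terms 4 (Dop_terms 3 L)) @ scale_terms 3 (Dop_terms 3 (Dop_terms 4 L)))"

lemma poly_of_ad_terms: "poly_of_terms (ad_terms n) = adpow n X Y"
proof (induction n)
  case 0
  then show ?case by (simp add: adpow_def Y_def)
next
  case (Suc n)
  have "poly_of_terms [([False], 1)] = X"
    by (simp add: X_def)
  with Suc show ?case
    by (simp add: poly_of_comm_terms adpow_def)
qed

lemma poly_of_eps_terms: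
  "poly_of_terms (eps_x_terms k) = eps_gen k False"
  "poly_of_terms (eps_y_terms k) = eps_gen k True"
  by (simp_all add: eps_x_terms_def eps_y_terms_def eps_gen_def eps_x_def eps_y_def
      poly_of_terms_concat poly_of_scale_terms poly_of_comm_terms poly_of_ad_terms
      interv_sum_list_conv_sum_set_nat atLeast0LessThan)

lemma poly_of_Dop_terms: "poly_of_terms (Dop_terms k L) = Dop k (poly_of_terms L)"
  by (simp add: Dop_terms_def poly_of_trie_terms trie_poly_add_Dop[OF poly_of_eps_terms])

lemma poly_of_pollack_terms: "poly_of_terms (pollack_terms L) = rho pollack_rel (poly_of_terms L)"
  by (simp add: pollack_terms_def poly_of_Dop_terms poly_of_scale_terms rho_pollack_rel fun_eq_iff)

lemma pollack_terms_X: "pollack_terms [([False], 1)] = []"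
  by code_simp

lemma pollack_terms_Y: "pollack_terms [([True], 1)] = []"
  by code_simp

lemma rho_pollack_rel_generator: "rho pollack_rel (mono [b]) = (\<lambda>v. 0)"
proof -
  have "rho pollack_rel (mono [b]) = poly_of_terms (pollack_terms [([b], 1)])"
    by (simp add: poly_of_pollack_terms)
  then show ?thesis
    by (cases b) (simp_all add: pollack_terms_X pollack_terms_Y)
qed

lemma pollack_rel_in_lie_rel: "pollack_rel \<in> lie_rel"
  using derivation_vanishes_on_lie_span[OF derivation_rho_pollack_rel rho_pollack_rel_generator]
  by (simp add: lie_rel_def pollack_rel_in_lie_span)

lemma shuffle_singletons: "shuffle (mono [a]) (mono [b]) = (\<lambda>w. mono [a, b] w + mono [b, a] w)"
proof -
  have "mono w w = 1" for w :: "'a list"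
    by (simp add: mono_def)
  then show ?thesis
    unfolding shuffle_def supp_mono by simp
qed

theorem mainTheorem9:
  fixes a b c d :: rat
  assumes "(\<lambda>v::nat list. a * mono [5,2] v + b * mono [2,5] v + c * mono [4,3] v + d * mono [3,4] v)
             \<in> U_dual"
  shows "\<exists>\<alpha> \<beta> \<gamma> :: rat.
           (\<lambda>v::nat list. a * mono [5,2] v + b * mono [2,5] v + c * mono [4,3] v + d * mono [3,4] v) =
           (\<lambda>v::nat list. \<alpha> * shuffle (mono [5]) (mono [2]) v + \<beta> * shuffle (mono [4]) (mono [3]) v
                 + \<gamma> * (3 * mono [5,2] v + mono [4,3] v))"
proof -
  have "pairing (\<lambda>v. a * mono [5,2] v + b * mono [2,5] v + c * mono [4,3] v + d * mono [3,4] v)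
          pollack_rel = 0"
    using assms U_ideal.gen[OF pollack_rel_in_lie_rel] by (simp add: U_dual_def)
  then have a: "a = b + 3 * c - 3 * d"
    by (simp add: pairing_pollack_rel mono_def)
  show ?thesis
    by (rule exI[of _ b], rule exI[of _ d], rule exI[of _ "c - d"])
      (simp add: a shuffle_singletons fun_eq_iff algebra_simps)
qed

end
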